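(* Let $b\in\mathbb{C}\setminus\{0,1\}$ and, for integers $i\ge 1$, let \[ r_i(z)=z^{-i}\Big(b\,e^{z}+(1-b)\sum_{j=0}^{i-1}\frac{z^j}{j!}\Big)\in\mathbb{C}((z)). \] Then for all integers $i,j\ge 1$, \[ \big(r_i(z),\,r_j(-z)\big)=\operatorname{Res}_z\, r_i(z)\,r_j(-z)=0 . \]
   Context: $\mathbb{C}((z))$ denotes formal Laurent series in $z$ with finitely many negative powers; $e^{z}=\sum_{k\ge 0}z^k/k!$ as a formal power series. For $f,g\in\mathbb{C}((z))$ the bilinear form is $(f(z),g(z))=\operatorname{Res}_z f(z)g(z)$, the coefficient of $z^{-1}$ in the product $f(z)g(z)$. *)

theory Defs
  imports "HOL-Computational_Algebra.Formal_Laurent_Series"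
begin

definition r_ser :: "complex \<Rightarrow> nat \<Rightarrow> complex fls" where
  "r_ser b i = fls_X_intpow (- int i) *
     fps_to_fls (fps_const b * fps_exp 1
       + fps_const (1 - b) * (\<Sum>j<i. fps_const (1 / of_nat (fact j)) * fps_X ^ j))"

definition fls_neg_var :: "complex fls \<Rightarrow> complex fls" where
  "fls_neg_var f = fls_compose_fps f (- fps_X)"

end

theory Submission
  imports Defs
begin

(* Write r_i(z) = z^(-i) A_i(z) with A_i(z) = sum_k a_k z^k / k!, where a_k = 1 for k < i
   and a_k = b for k >= i. Then Res r_i(z) r_j(-z) is, up to sign, the coefficient of z^n,
   n = i + j - 1, in A_i(z) A_j(-z). Since exactly one of k < i and n - k < j holds, the product
   of the k-th coefficient of A_i(z) and the (n-k)-th of A_j(-z) is b times the corresponding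
   product for e^z and e^(-z). So the coefficient is b times the coefficient of z^n in
   e^z e^(-z) = 1, which vanishes because n > 0. *)

definition r_fps :: "complex \<Rightarrow> nat \<Rightarrow> complex fps" where
  "r_fps b i = fps_const b * fps_exp 1
     + fps_const (1 - b) * (\<Sum>j<i. fps_const (1 / of_nat (fact j)) * fps_X ^ j)"

lemma r_ser_conv_shift: "r_ser b i = fls_shift (int i) (fps_to_fls (r_fps b i))"
  unfolding r_ser_def r_fps_def by (subst fls_X_intpow_times_conv_shift) simp

lemma r_fps_nth: "r_fps b i $ k = (if k < i then 1 else b) / fact k"
proof -
  have "(\<Sum>j<i. fps_const (1 / of_nat (fact j)) * fps_X ^ j) $ k
      = (if k < i then 1 / fact k else (0::complex))"
    by (simp add: fps_sum_nth if_distrib[where f="\<lambda>x. x / _"] cong: if_cong)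
  then show ?thesis
    by (simp add: r_fps_def field_simps)
qed

lemma fls_neg_var_shift:
  "fls_neg_var (fls_shift (int n) (fps_to_fls f))
     = fls_const ((-1) ^ n) * fls_shift (int n) (fps_to_fls (f oo - fps_X))"
proof -
  have "fls_neg_var (fls_shift (int n) (fps_to_fls f))
      = fps_to_fls (f oo - fps_X) * (fls_const (-1) * fls_X) powi (- int n)"
    unfolding fls_neg_var_def by (simp add: fls_compose_fps_shift)
  also have "(fls_const (-1) * fls_X :: complex fls) powi (- int n)
      = fls_const ((-1) powi (- int n)) * fls_X powi (- int n)"
    by (simp only: power_int_mult_distrib fls_const_power_int)
  also have "(-1 :: complex) powi (- int n) = (-1) ^ n"
    by (simp add: power_int_minus_one_minus)
  finally show ?thesis
    by (simp add: fls_shifted_times_simps mult.commute)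
qed

lemma fls_residue_shift_times_shift:
  fixes f g :: "'a::comm_ring_1 fps"
  assumes "m + n \<ge> 1"
  shows "fls_residue (fls_shift (int m) (fps_to_fls f) * fls_shift (int n) (fps_to_fls g))
           = (f * g) $ (m + n - 1)"
proof -
  have "fls_shift (int m) (fps_to_fls f) * fls_shift (int n) (fps_to_fls g)
      = fls_shift (int m + int n) (fps_to_fls (f * g))"
    by (simp add: fls_times_fps_to_fls fls_shifted_times_simps)
  moreover have "nat (int m + int n - 1) = m + n - 1"
    using assms by simp
  ultimately show ?thesis
    using assms by simp
qed

lemma r_fps_times_reflected_nth:
  assumes "i \<ge> 1" and "j \<ge> 1"
  shows "(r_fps b i * (r_fps b j oo - fps_X)) $ (i + j - 1) = 0"
proof -
  define n where "n = i + j - 1"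
  have term_eq: "r_fps b i $ k * (r_fps b j oo - fps_X) $ (n - k)
      = b * (fps_exp 1 $ k * fps_exp (-1) $ (n - k))" if "k \<le> n" for k
  proof -
    have "(if k < i then 1 else b) * (if n - k < j then 1 else b) = b"
      using that assms by (auto simp: n_def)
    then show ?thesis
      by (simp add: r_fps_nth fps_compose_uminus' fps_exp_def power_minus')
  qed
  have "(r_fps b i * (r_fps b j oo - fps_X)) $ n = b * (fps_exp 1 * fps_exp (-1)) $ n"
    by (simp add: fps_mult_nth sum_distrib_left term_eq)
  also have "fps_exp 1 * fps_exp (-1) = (1 :: complex fps)"
    by (simp flip: fps_exp_add_mult)
  finally show ?thesis
    using assms by (simp add: n_def)
qed

theorem lemma1:
  fixes b :: complex and i j :: nat
  assumes "b \<noteq> 0" and "b \<noteq> 1" and "i \<ge> 1" and "j \<ge> 1"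
  shows "fls_residue (r_ser b i * fls_neg_var (r_ser b j)) = 0"
proof -
  have "fls_residue (r_ser b i * fls_neg_var (r_ser b j))
      = (-1) ^ j * fls_residue (fls_shift (int i) (fps_to_fls (r_fps b i))
          * fls_shift (int j) (fps_to_fls (r_fps b j oo - fps_X)))"
    unfolding r_ser_conv_shift fls_neg_var_shift
    by (simp only: mult.left_commute fls_residue_fls_const_times)
  also have "\<dots> = (-1) ^ j * (r_fps b i * (r_fps b j oo - fps_X)) $ (i + j - 1)"
    using assms by (subst fls_residue_shift_times_shift) auto
  also have "\<dots> = 0"
    using r_fps_times_reflected_nth[OF assms(3,4)] by simp
  finally show ?thesis .
qed

end
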